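(* Let $u, v: \mathbb{R}^d\times[0,1]\to\mathbb{R}^d$ be $C^2$ velocity fields and let $(p_t)_{t\in[0,1]}$, $(q_t)_{t\in[0,1]}$ be paths of differentiable, strictly positive probability densities on $\mathbb{R}^d$ satisfying $\partial_t p_t + \nabla\cdot(p_t u) = 0$ and $\partial_t q_t + \nabla\cdot(q_t v) = 0$, with $p_0 = q_0$. Suppose that for some $\epsilon>0$, $$\int_0^1 \mathbb{E}_{x\sim p_t}\big[\|u(x,t)-v(x,t)\|_2^2\big]\,dt \le \epsilon^2 .$$ Then $$\mathrm{KL}(p_1\|q_1) \le \epsilon \sqrt{\int_0^1 \mathbb{E}_{x\sim p_t}\big[\|\nabla\log p_t(x) - \nabla \log q_t(x)\|_2^2\big]\,dt}.$$
   Context: $\mathrm{KL}(p\|q) = \int p\log(p/q)\,dx$. Standing regularity convention: the densities and velocity fields are smooth enough and decay fast enough at infinity that differentiation under the integral sign is justified, all expectations appearing are finite, and integrations by parts over $\mathbb{R}^d$ produce no boundary terms. *)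

theory Defs
  imports "HOL-Analysis.Analysis"
begin

definition divergence :: "('a::euclidean_space \<Rightarrow> 'a) \<Rightarrow> 'a \<Rightarrow> real" where
  "divergence F x = (\<Sum>i\<in>Basis. (frechet_derivative F (at x) i) \<bullet> i)"

definition grad :: "('a::euclidean_space \<Rightarrow> real) \<Rightarrow> 'a \<Rightarrow> 'a" where
  "grad f x = (\<Sum>i\<in>Basis. frechet_derivative f (at x) i *\<^sub>R i)"

definition KL :: "('a::euclidean_space \<Rightarrow> real) \<Rightarrow> ('a \<Rightarrow> real) \<Rightarrow> real" where
  "KL p q = (\<integral>x. p x * ln (p x / q x) \<partial>lborel)"

definition expect :: "('a::euclidean_space \<Rightarrow> real) \<Rightarrow> ('a \<Rightarrow> real) \<Rightarrow> real" where
  "expect p f = (\<integral>x. p x * f x \<partial>lborel)"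

definition C2_on :: "'b::euclidean_space set \<Rightarrow> ('b \<Rightarrow> 'c::euclidean_space) \<Rightarrow> bool" where
  "C2_on S f \<longleftrightarrow> (\<exists>f' f''.
     (\<forall>z\<in>S. (f has_derivative blinfun_apply (f' z)) (at z within S)) \<and>
     (\<forall>z\<in>S. (f' has_derivative blinfun_apply (f'' z)) (at z within S)) \<and>
     continuous_on S f'')"

definition prob_density :: "('a::euclidean_space \<Rightarrow> real) \<Rightarrow> bool" where
  "prob_density p \<longleftrightarrow> p \<in> borel_measurable lborel \<and> (\<forall>x. 0 \<le> p x) \<and>
     integrable lborel p \<and> (\<integral>x. p x \<partial>lborel) = 1"

definition ibp_holds :: "('a::euclidean_space \<Rightarrow> real) \<Rightarrow> ('a \<Rightarrow> 'a) \<Rightarrow> bool" where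
  "ibp_holds f G \<longleftrightarrow>
     integrable lborel (\<lambda>x. f x * divergence G x) \<and>
     integrable lborel (\<lambda>x. grad f x \<bullet> G x) \<and>
     (\<integral>x. f x * divergence G x \<partial>lborel) = - (\<integral>x. grad f x \<bullet> G x \<partial>lborel)"

end

theory Submission imports Defs begin

(* Along the two flows, the continuity equations and integration by parts turn the time
   derivative of KL(p_t || q_t) into the p_t-expectation of (grad log p_t - grad log q_t) . (u_t - v_t):
   the mass term integrates to zero, and grad (p/q) = (p/q) grad log (p/q) makes both fluxes
   multiples of p. Young's inequality with a free weight l bounds this rate by l/2 times the score
   gap plus 1/(2l) times the flow gap. Integrating over [0,1] from KL(p_0 || q_0) = 0 and choosing
   l = eps / sqrt S, where S is the time-integrated score gap, gives the bound. *)

lemma grad_eqI: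
  fixes f :: "'a::euclidean_space \<Rightarrow> real"
  assumes "(f has_derivative (\<lambda>h. c \<bullet> h)) (at x)"
  shows "grad f x = c"
proof -
  have "grad f x = (\<Sum>i\<in>Basis. (c \<bullet> i) *\<^sub>R i)"
    unfolding grad_def frechet_derivative_at[OF assms, symmetric] ..
  also have "\<dots> = c"
    using euclidean_representation[of c] by (simp add: inner_commute)
  finally show ?thesis .
qed

lemma has_derivative_grad:
  fixes f :: "'a::euclidean_space \<Rightarrow> real"
  assumes "f differentiable (at x)"
  shows "(f has_derivative (\<lambda>h. grad f x \<bullet> h)) (at x)"
proof -
  let ?D = "frechet_derivative f (at x)"
  have D: "(f has_derivative ?D) (at x)"
    using assms frechet_derivative_works by blast
  interpret D: linear ?D
    using has_derivative_linear[OF D] .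
  have "grad f x \<bullet> h = ?D h" for h
  proof -
    have "grad f x \<bullet> h = (\<Sum>i\<in>Basis. (h \<bullet> i) * ?D i)"
      unfolding grad_def by (simp add: inner_sum_right mult.commute inner_commute)
    also have "\<dots> = ?D (\<Sum>i\<in>Basis. (h \<bullet> i) *\<^sub>R i)"
      by (simp add: D.sum D.scale)
    finally show ?thesis
      by (simp add: euclidean_representation)
  qed
  then show ?thesis
    using D by simp
qed

lemma grad_compose:
  fixes f :: "'a::euclidean_space \<Rightarrow> real"
  assumes "(g has_real_derivative g') (at (f x))" and "f differentiable (at x)"
  shows "grad (\<lambda>y. g (f y)) x = g' *\<^sub>R grad f x"
  by (rule grad_eqI, rule has_derivative_eq_rhs,
      rule DERIV_compose_FDERIV[OF assms(1) has_derivative_grad[OF assms(2)]]) auto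

lemma grad_diff:
  fixes f g :: "'a::euclidean_space \<Rightarrow> real"
  assumes "f differentiable (at x)" and "g differentiable (at x)"
  shows "grad (\<lambda>y. f y - g y) x = grad f x - grad g x"
  by (rule grad_eqI, rule has_derivative_eq_rhs,
      rule has_derivative_diff[OF has_derivative_grad[OF assms(1)] has_derivative_grad[OF assms(2)]])
     (simp add: inner_diff_left)

lemma grad_ln:
  fixes f :: "'a::euclidean_space \<Rightarrow> real"
  assumes "f differentiable (at x)" and "0 < f x"
  shows "grad (\<lambda>y. ln (f y)) x = inverse (f x) *\<^sub>R grad f x"
  using grad_compose[OF DERIV_ln[OF assms(2)] assms(1)] .

lemma differentiable_ln:
  fixes f :: "'a::euclidean_space \<Rightarrow> real"
  assumes "f differentiable (at x)" and "0 < f x"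
  shows "(\<lambda>y. ln (f y)) differentiable (at x)"
  using DERIV_compose_FDERIV[OF DERIV_ln[OF assms(2)] has_derivative_grad[OF assms(1)]]
  by (rule differentiableI)

lemma grad_const: "grad (\<lambda>_. c) (x::'a::euclidean_space) = 0"
  by (rule grad_eqI) (simp add: has_derivative_const)

lemma grad_ln_divide:
  fixes p q :: "'a::euclidean_space \<Rightarrow> real"
  assumes "\<And>y. 0 < p y" and "\<And>y. 0 < q y"
    and "p differentiable (at x)" and "q differentiable (at x)"
  shows "grad (\<lambda>y. ln (p y / q y)) x = grad (\<lambda>y. ln (p y)) x - grad (\<lambda>y. ln (q y)) x"
proof -
  have "(\<lambda>y. ln (p y / q y)) = (\<lambda>y. ln (p y) - ln (q y))"
    using assms(1,2) by (simp add: ln_div less_imp_neq[symmetric])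
  then show ?thesis
    using grad_diff differentiable_ln assms by metis
qed

lemma grad_divide_eq_scaleR_grad_ln:
  fixes p q :: "'a::euclidean_space \<Rightarrow> real"
  assumes "p differentiable (at x)" and "q differentiable (at x)" and "0 < p x" and "0 < q x"
  shows "grad (\<lambda>y. p y / q y) x = (p x / q x) *\<^sub>R grad (\<lambda>y. ln (p y / q y)) x"
proof -
  have "(\<lambda>y. p y / q y) differentiable (at x)"
    using assms by (intro differentiable_divide) auto
  then have "grad (\<lambda>y. ln (p y / q y)) x = inverse (p x / q x) *\<^sub>R grad (\<lambda>y. p y / q y) x"
    using assms(3,4) by (intro grad_ln) auto
  then show ?thesis
    using assms(3,4) by simp
qed

lemma inner_le_weighted_squares:
  fixes s w :: "'a::real_inner"
  assumes "0 < l"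
  shows "s \<bullet> w \<le> l / 2 * (norm s)\<^sup>2 + 1 / (2 * l) * (norm w)\<^sup>2"
proof -
  have "0 \<le> (norm (l *\<^sub>R s - w))\<^sup>2" by simp
  also have "\<dots> = l\<^sup>2 * (norm s)\<^sup>2 - 2 * l * (s \<bullet> w) + (norm w)\<^sup>2"
    unfolding power2_norm_eq_inner
    by (simp add: inner_diff_left inner_diff_right inner_commute power2_eq_square algebra_simps)
  finally show ?thesis
    using assms by (simp add: field_simps power2_eq_square)
qed

lemma expect_nonneg:
  assumes "\<And>x. 0 \<le> p x" and "\<And>x. 0 \<le> f x"
  shows "0 \<le> expect p f"
  unfolding expect_def using assms by (simp add: integral_nonneg)

lemma expect_inner_le:
  fixes p :: "'a::euclidean_space \<Rightarrow> real" and s w :: "'a \<Rightarrow> 'b::real_inner"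
  assumes p_nonneg: "\<And>x. 0 \<le> p x" and l: "0 < l"
    and "integrable lborel (\<lambda>x. p x * (s x \<bullet> w x))"
    and "integrable lborel (\<lambda>x. p x * (norm (s x))\<^sup>2)"
    and "integrable lborel (\<lambda>x. p x * (norm (w x))\<^sup>2)"
  shows "expect p (\<lambda>x. s x \<bullet> w x)
    \<le> l / 2 * expect p (\<lambda>x. (norm (s x))\<^sup>2) + 1 / (2 * l) * expect p (\<lambda>x. (norm (w x))\<^sup>2)"
proof -
  have "expect p (\<lambda>x. s x \<bullet> w x)
      \<le> (\<integral>x. l / 2 * (p x * (norm (s x))\<^sup>2) + 1 / (2 * l) * (p x * (norm (w x))\<^sup>2) \<partial>lborel)"
    unfolding expect_def
  proof (rule integral_mono)
    fix x
    have "p x * (s x \<bullet> w x) \<le> p x * (l / 2 * (norm (s x))\<^sup>2 + 1 / (2 * l) * (norm (w x))\<^sup>2)"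
      using inner_le_weighted_squares[OF l] p_nonneg by (intro mult_left_mono)
    then show "p x * (s x \<bullet> w x)
        \<le> l / 2 * (p x * (norm (s x))\<^sup>2) + 1 / (2 * l) * (p x * (norm (w x))\<^sup>2)"
      by (simp add: algebra_simps)
  qed (use assms in auto)
  also have "\<dots> = l / 2 * expect p (\<lambda>x. (norm (s x))\<^sup>2) + 1 / (2 * l) * expect p (\<lambda>x. (norm (w x))\<^sup>2)"
    unfolding expect_def using assms by simp
  finally show ?thesis .
qed

lemma KL_self: "KL p p = 0"
proof -
  have vanish: "p x * ln (p x / p x) = 0" for x
    by (cases "p x = 0") simp_all
  show ?thesis
    unfolding KL_def vanish by simp
qed

lemma has_real_derivative_mult_ln_divide:
  assumes a: "(a has_real_derivative a') (at t within S)"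
    and b: "(b has_real_derivative b') (at t within S)"
    and "0 < a t" and "0 < b t"
  shows "((\<lambda>s. a s * ln (a s / b s)) has_real_derivative
           a' * (ln (a t / b t) + 1) - a t / b t * b') (at t within S)"
proof -
  have "((\<lambda>s. ln (a s / b s)) has_real_derivative
          inverse (a t / b t) * ((a' * b t - a t * b') / (b t * b t))) (at t within S)"
    using assms by (intro DERIV_chain2[OF DERIV_ln DERIV_divide[OF a b]]) auto
  from DERIV_mult[OF a this] show ?thesis
    by (rule DERIV_cong) (use assms in \<open>simp add: field_simps\<close>)
qed

lemma diff_le_set_integral_of_derivative_le:
  fixes F f g :: "real \<Rightarrow> real"
  assumes "a \<le> b"
    and F': "\<And>t. t \<in> {a..b} \<Longrightarrow> (F has_real_derivative f t) (at t within {a..b})"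
    and f_le: "\<And>t. t \<in> {a..b} \<Longrightarrow> f t \<le> g t"
    and g: "set_integrable lborel {a..b} g"
  shows "F b - F a \<le> (\<integral>t\<in>{a..b}. g t \<partial>lborel)"
proof (rule has_integral_le)
  show "(f has_integral F b - F a) {a..b}"
    using assms(1) F' by (intro fundamental_theorem_of_calculus)
      (auto simp: has_real_derivative_iff_has_vector_derivative[symmetric])
  show "(g has_integral (\<integral>t\<in>{a..b}. g t \<partial>lborel)) {a..b}"
    using set_borel_integral_eq_integral[OF g] by auto
qed (use f_le in auto)

lemma le_mult_sqrt_of_scaled_bounds:
  fixes k S e :: real
  assumes bound: "\<And>l. 0 < l \<Longrightarrow> k \<le> l / 2 * S + 1 / (2 * l) * e\<^sup>2"
    and "0 \<le> S" and "0 < e"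
  shows "k \<le> e * sqrt S"
proof (cases "S = 0")
  case True
  show ?thesis
  proof (rule ccontr)
    assume "\<not> ?thesis"
    then have "0 < k" using True by simp
    then have "k \<le> k / 2"
      using bound[of "e\<^sup>2 / k"] \<open>0 < e\<close> True by (simp add: field_simps)
    with \<open>0 < k\<close> show False by simp
  qed
next
  case False
  define r where "r = sqrt S"
  have "0 < r" and S: "S = r\<^sup>2"
    using False \<open>0 \<le> S\<close> by (simp_all add: r_def)
  have "k \<le> (e / r) / 2 * S + 1 / (2 * (e / r)) * e\<^sup>2"
    using bound[of "e / r"] \<open>0 < r\<close> \<open>0 < e\<close> by simp
  also have "\<dots> = e * r"
    using \<open>0 < r\<close> \<open>0 < e\<close> unfolding S by (simp add: field_simps power2_eq_square)
  finally show ?thesis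
    unfolding r_def .
qed

lemma KL_rate_eq:
  fixes p q :: "'a::euclidean_space \<Rightarrow> real" and U V :: "'a \<Rightarrow> 'a"
  assumes p_pos: "\<And>x. 0 < p x" and q_pos: "\<And>x. 0 < q x"
    and p_diff: "\<And>x. p differentiable (at x)" and q_diff: "\<And>x. q differentiable (at x)"
    and ibp_mass: "ibp_holds (\<lambda>_. 1) (\<lambda>x. p x *\<^sub>R U x)"
    and ibp_log: "ibp_holds (\<lambda>x. ln (p x / q x)) (\<lambda>x. p x *\<^sub>R U x)"
    and ibp_ratio: "ibp_holds (\<lambda>x. p x / q x) (\<lambda>x. q x *\<^sub>R V x)"
  defines "score x \<equiv> grad (\<lambda>y. ln (p y)) x - grad (\<lambda>y. ln (q y)) x"
  shows "integrable lborel (\<lambda>x. p x * (score x \<bullet> (U x - V x)))"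
    and "(\<integral>x. - divergence (\<lambda>y. p y *\<^sub>R U y) x * (ln (p x / q x) + 1)
              - p x / q x * - divergence (\<lambda>y. q y *\<^sub>R V y) x \<partial>lborel)
         = expect p (\<lambda>x. score x \<bullet> (U x - V x))"
proof -
  define div_p where "div_p = divergence (\<lambda>y. p y *\<^sub>R U y)"
  define div_q where "div_q = divergence (\<lambda>y. q y *\<^sub>R V y)"
  define flux_log where "flux_log x = grad (\<lambda>y. ln (p y / q y)) x \<bullet> (p x *\<^sub>R U x)" for x
  define flux_ratio where "flux_ratio x = grad (\<lambda>y. p y / q y) x \<bullet> (q x *\<^sub>R V x)" for x
  have flux: "flux_log x - flux_ratio x = p x * (score x \<bullet> (U x - V x))" for x
  proof -
    have "grad (\<lambda>y. ln (p y / q y)) x = score x"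
      unfolding score_def using assms by (intro grad_ln_divide)
    moreover have "grad (\<lambda>y. p y / q y) x = (p x / q x) *\<^sub>R score x"
      using calculation assms by (simp add: grad_divide_eq_scaleR_grad_ln)
    ultimately show ?thesis
      using q_pos[of x] by (simp add: flux_log_def flux_ratio_def inner_diff_right algebra_simps)
  qed
  have mass: "integrable lborel div_p" "(\<integral>x. div_p x \<partial>lborel) = 0"
    using ibp_mass unfolding ibp_holds_def div_p_def by (simp_all add: grad_const)
  have log: "integrable lborel (\<lambda>x. ln (p x / q x) * div_p x)" "integrable lborel flux_log"
    "(\<integral>x. ln (p x / q x) * div_p x \<partial>lborel) = - (\<integral>x. flux_log x \<partial>lborel)"
    using ibp_log unfolding ibp_holds_def div_p_def flux_log_def by auto
  have ratio: "integrable lborel (\<lambda>x. p x / q x * div_q x)" "integrable lborel flux_ratio"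
    "(\<integral>x. p x / q x * div_q x \<partial>lborel) = - (\<integral>x. flux_ratio x \<partial>lborel)"
    using ibp_ratio unfolding ibp_holds_def div_q_def flux_ratio_def by auto
  show "integrable lborel (\<lambda>x. p x * (score x \<bullet> (U x - V x)))"
    using log(2) ratio(2) unfolding flux[symmetric] by simp
  have "(\<integral>x. - div_p x * (ln (p x / q x) + 1) - p x / q x * - div_q x \<partial>lborel)
      = - (\<integral>x. ln (p x / q x) * div_p x \<partial>lborel) - (\<integral>x. div_p x \<partial>lborel)
        + (\<integral>x. p x / q x * div_q x \<partial>lborel)"
    using mass log ratio by (simp add: algebra_simps)
  also have "\<dots> = (\<integral>x. flux_log x - flux_ratio x \<partial>lborel)"
    using mass log ratio by simp
  finally show "(\<integral>x. - divergence (\<lambda>y. p y *\<^sub>R U y) x * (ln (p x / q x) + 1)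
              - p x / q x * - divergence (\<lambda>y. q y *\<^sub>R V y) x \<partial>lborel)
         = expect p (\<lambda>x. score x \<bullet> (U x - V x))"
    unfolding expect_def flux div_p_def div_q_def .
qed

lemma KL_rate_le:
  fixes p q :: "'a::euclidean_space \<Rightarrow> real" and U V :: "'a \<Rightarrow> 'a"
  assumes p_pos: "\<And>x. 0 < p x" and q_pos: "\<And>x. 0 < q x"
    and p_diff: "\<And>x. p differentiable (at x)" and q_diff: "\<And>x. q differentiable (at x)"
    and ibp_mass: "ibp_holds (\<lambda>_. 1) (\<lambda>x. p x *\<^sub>R U x)"
    and ibp_log: "ibp_holds (\<lambda>x. ln (p x / q x)) (\<lambda>x. p x *\<^sub>R U x)"
    and ibp_ratio: "ibp_holds (\<lambda>x. p x / q x) (\<lambda>x. q x *\<^sub>R V x)"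
    and score_L2: "integrable lborel
          (\<lambda>x. p x * (norm (grad (\<lambda>y. ln (p y)) x - grad (\<lambda>y. ln (q y)) x))\<^sup>2)"
    and flow_L2: "integrable lborel (\<lambda>x. p x * (norm (U x - V x))\<^sup>2)"
    and "0 < l"
  shows "(\<integral>x. - divergence (\<lambda>y. p y *\<^sub>R U y) x * (ln (p x / q x) + 1)
              - p x / q x * - divergence (\<lambda>y. q y *\<^sub>R V y) x \<partial>lborel)
    \<le> l / 2 * expect p (\<lambda>x. (norm (grad (\<lambda>y. ln (p y)) x - grad (\<lambda>y. ln (q y)) x))\<^sup>2)
      + 1 / (2 * l) * expect p (\<lambda>x. (norm (U x - V x))\<^sup>2)"
proof -
  note rate = KL_rate_eq[OF p_pos q_pos p_diff q_diff ibp_mass ibp_log ibp_ratio]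
  show ?thesis
    unfolding rate(2) using rate(1) score_L2 flow_L2 \<open>0 < l\<close> p_pos
    by (intro expect_inner_le) (auto intro: less_imp_le)
qed

lemma set_integral_nonneg:
  fixes f :: "'a \<Rightarrow> real"
  assumes "\<And>x. x \<in> A \<Longrightarrow> 0 \<le> f x"
  shows "0 \<le> (\<integral>x\<in>A. f x \<partial>M)"
  unfolding set_lebesgue_integral_def using assms
  by (auto intro!: integral_nonneg simp: indicator_def)

theorem theorem3p6:
  fixes u v :: "'a::euclidean_space \<Rightarrow> real \<Rightarrow> 'a"
    and p q :: "real \<Rightarrow> 'a \<Rightarrow> real"
    and \<epsilon> :: real
  assumes u_C2: "C2_on (UNIV \<times> {0..1}) (\<lambda>(x, t). u x t)"
    and v_C2: "C2_on (UNIV \<times> {0..1}) (\<lambda>(x, t). v x t)"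
    and p_dens: "\<forall>t\<in>{0..1}. prob_density (p t)"
    and q_dens: "\<forall>t\<in>{0..1}. prob_density (q t)"
    and p_pos: "\<forall>t\<in>{0..1}. \<forall>x. 0 < p t x"
    and q_pos: "\<forall>t\<in>{0..1}. \<forall>x. 0 < q t x"
    and p_diff: "\<forall>t\<in>{0..1}. \<forall>x. p t differentiable (at x)"
    and q_diff: "\<forall>t\<in>{0..1}. \<forall>x. q t differentiable (at x)"
    \<comment> \<open>continuity equations: d/dt p_t(x) = - div(p_t u_t)(x), likewise for q, v\<close>
    and p_cont: "\<forall>t\<in>{0..1}. \<forall>x. ((\<lambda>s. p s x) has_real_derivative
                    - divergence (\<lambda>y. p t y *\<^sub>R u y t) x) (at t within {0..1})"
    and q_cont: "\<forall>t\<in>{0..1}. \<forall>x. ((\<lambda>s. q s x) has_real_derivative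
                    - divergence (\<lambda>y. q t y *\<^sub>R v y t) x) (at t within {0..1})"
    and init: "p 0 = q 0"
    and eps_pos: "\<epsilon> > 0"
    and flow_err: "(\<integral>t\<in>{0..1}. expect (p t) (\<lambda>x. (norm (u x t - v x t))\<^sup>2) \<partial>lborel) \<le> \<epsilon>\<^sup>2"
    \<comment> \<open>standing regularity convention: differentiation under the integral sign is justified\<close>
    and diff_under_int: "\<forall>t\<in>{0..1}. \<forall>D. (\<forall>x. ((\<lambda>s. p s x * ln (p s x / q s x))
                    has_real_derivative D x) (at t within {0..1})) \<longrightarrow>
                 ((\<lambda>s. KL (p s) (q s)) has_real_derivative (\<integral>x. D x \<partial>lborel)) (at t within {0..1})"
    \<comment> \<open>standing regularity convention: integrations by parts produce no boundary terms\<close>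
    and ibp1: "\<forall>t\<in>{0..1}. ibp_holds (\<lambda>_. 1) (\<lambda>x. p t x *\<^sub>R u x t)"
    and ibp2: "\<forall>t\<in>{0..1}. ibp_holds (\<lambda>x. ln (p t x / q t x)) (\<lambda>x. p t x *\<^sub>R u x t)"
    and ibp3: "\<forall>t\<in>{0..1}. ibp_holds (\<lambda>x. p t x / q t x) (\<lambda>x. q t x *\<^sub>R v x t)"
    \<comment> \<open>standing regularity convention: all expectations appearing are finite\<close>
    and fin_kl: "\<forall>t\<in>{0..1}. integrable lborel (\<lambda>x. p t x * ln (p t x / q t x))"
    and fin_flow: "\<forall>t\<in>{0..1}. integrable lborel (\<lambda>x. p t x * (norm (u x t - v x t))\<^sup>2)"
    and fin_score: "\<forall>t\<in>{0..1}. integrable lborel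
                 (\<lambda>x. p t x * (norm (grad (\<lambda>y. ln (p t y)) x - grad (\<lambda>y. ln (q t y)) x))\<^sup>2)"
    and fin_flow_t: "set_integrable lborel {0..1}
                 (\<lambda>t. expect (p t) (\<lambda>x. (norm (u x t - v x t))\<^sup>2))"
    and fin_score_t: "set_integrable lborel {0..1}
                 (\<lambda>t. expect (p t) (\<lambda>x. (norm (grad (\<lambda>y. ln (p t y)) x - grad (\<lambda>y. ln (q t y)) x))\<^sup>2))"
  shows "KL (p 1) (q 1) \<le> \<epsilon> * sqrt (\<integral>t\<in>{0..1}.
           expect (p t) (\<lambda>x. (norm (grad (\<lambda>y. ln (p t y)) x - grad (\<lambda>y. ln (q t y)) x))\<^sup>2) \<partial>lborel)"
proof -
  define A where "A t = expect (p t) (\<lambda>x. (norm (grad (\<lambda>y. ln (p t y)) x - grad (\<lambda>y. ln (q t y)) x))\<^sup>2)" for t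
  define B where "B t = expect (p t) (\<lambda>x. (norm (u x t - v x t))\<^sup>2)" for t
  define K where "K t = (\<integral>x. - divergence (\<lambda>y. p t y *\<^sub>R u y t) x * (ln (p t x / q t x) + 1)
                  - p t x / q t x * - divergence (\<lambda>y. q t y *\<^sub>R v y t) x \<partial>lborel)" for t
  have KL_deriv: "((\<lambda>s. KL (p s) (q s)) has_real_derivative K t) (at t within {0..1})"
    if "t \<in> {0..1}" for t
    unfolding K_def using that p_cont q_cont p_pos q_pos
    by (intro diff_under_int[rule_format, OF that] allI has_real_derivative_mult_ln_divide) auto
  have K_le: "K t \<le> l / 2 * A t + 1 / (2 * l) * B t" if "t \<in> {0..1}" and "0 < l" for t l
    unfolding K_def A_def B_def using that p_pos q_pos p_diff q_diff ibp1 ibp2 ibp3 fin_score fin_flow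
    by (intro KL_rate_le) auto
  have A: "set_integrable lborel {0..1} A" and B: "set_integrable lborel {0..1} B"
    using fin_score_t fin_flow_t unfolding A_def B_def .
  have "KL (p 1) (q 1) \<le> l / 2 * (\<integral>t\<in>{0..1}. A t \<partial>lborel) + 1 / (2 * l) * \<epsilon>\<^sup>2"
    if "0 < l" for l
  proof -
    have "KL (p 1) (q 1) - KL (p 0) (q 0) \<le> (\<integral>t\<in>{0..1}. l / 2 * A t + 1 / (2 * l) * B t \<partial>lborel)"
      using KL_deriv K_le[OF _ that] A B by (intro diff_le_set_integral_of_derivative_le) auto
    also have "\<dots> = l / 2 * (\<integral>t\<in>{0..1}. A t \<partial>lborel) + 1 / (2 * l) * (\<integral>t\<in>{0..1}. B t \<partial>lborel)"
      using A B by (simp add: set_integral_add set_integral_mult_right)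
    also have "\<dots> \<le> l / 2 * (\<integral>t\<in>{0..1}. A t \<partial>lborel) + 1 / (2 * l) * \<epsilon>\<^sup>2"
      using flow_err that unfolding B_def by (simp add: divide_right_mono)
    finally show ?thesis
      by (simp add: init KL_self)
  qed
  moreover have "0 \<le> (\<integral>t\<in>{0..1}. A t \<partial>lborel)"
    using p_dens unfolding A_def prob_density_def by (intro set_integral_nonneg expect_nonneg) auto
  ultimately show ?thesis
    unfolding A_def[symmetric] using eps_pos by (rule le_mult_sqrt_of_scaled_bounds)
qed

end
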